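(* Let $\mathcal{L}=(L,\wedge,\vee,0,1)$ be a complete lattice in which $0$ is cocompact, and let $p\in L$ with $\Omega(p)\neq\emptyset$. Then $p$ is strongly irreducible in $L$ if and only if $p$ is a pseudo-complement of an atom $a$ of $L$. In this case every element of $L$ is comparable to $a$ or to $p$.
   Context: $p$ is strongly irreducible if for all $a,b\in L$: $a\wedge b\leq p$ implies $a\leq p$ or $b\leq p$. $\Omega(p)=\{x\in L\setminus\{0\}\mid p\wedge x=0\}$. An element $c$ is cocompact if whenever $\bigwedge A\leq c$ for a subset $A\subseteq L$ there is a finite $A'\subseteq A$ with $\bigwedge A'\leq c$. An atom is an element $a\neq 0$ with $[0,a]=\{0,a\}$. A pseudo-complement of $a$ is the greatest $x\in L$ with $a\wedge x=0$. *)

theory Defs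
  imports Main
begin

definition strongly_irreducible :: "'a::complete_lattice \<Rightarrow> bool" where
  "strongly_irreducible p \<longleftrightarrow> (\<forall>a b. inf a b \<le> p \<longrightarrow> a \<le> p \<or> b \<le> p)"

definition Omega :: "'a::complete_lattice \<Rightarrow> 'a set" where
  "Omega p = {x. x \<noteq> bot \<and> inf p x = bot}"

definition cocompact :: "'a::complete_lattice \<Rightarrow> bool" where
  "cocompact c \<longleftrightarrow> (\<forall>A. Inf A \<le> c \<longrightarrow> (\<exists>A'. A' \<subseteq> A \<and> finite A' \<and> Inf A' \<le> c))"

definition atom :: "'a::complete_lattice \<Rightarrow> bool" where
  "atom a \<longleftrightarrow> a \<noteq> bot \<and> {x. bot \<le> x \<and> x \<le> a} = {bot, a}"

definition pseudo_complement :: "'a::complete_lattice \<Rightarrow> 'a \<Rightarrow> bool" where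
  "pseudo_complement a x \<longleftrightarrow> inf a x = bot \<and> (\<forall>y. inf a y = bot \<longrightarrow> y \<le> x)"

definition comparable :: "'a::order \<Rightarrow> 'a \<Rightarrow> bool" where
  "comparable x y \<longleftrightarrow> x \<le> y \<or> y \<le> x"

end

theory Submission
  imports Defs
begin

text \<open>If \<open>p\<close> is strongly irreducible, then \<open>\<Omega>(p)\<close> is closed under finite meets, so cocompactness
  of \<open>0\<close> forces \<open>a = \<Sqinter>\<Omega>(p) \<noteq> 0\<close>; this least element of \<open>\<Omega>(p)\<close> is an atom, and strong
  irreducibility makes \<open>p\<close> its pseudo-complement. Conversely, an atom \<open>a\<close> meets every \<open>x\<close> either
  in \<open>0\<close> (then \<open>x \<le> p\<close>) or in \<open>a\<close> (then \<open>a \<le> x\<close>), which gives both strong irreducibility of its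
  pseudo-complement \<open>p\<close> and the comparability statement.\<close>

lemma atom_inf_eq_bot_or_le:
  fixes a :: "'a::complete_lattice"
  assumes "atom a"
  shows "inf a x = bot \<or> a \<le> x"
proof -
  have "inf a x \<in> {y. bot \<le> y \<and> y \<le> a}" by simp
  with assms have "inf a x = bot \<or> inf a x = a" by (auto simp: atom_def)
  then show ?thesis by (metis inf.absorb_iff1)
qed

lemma pseudo_complement_of_atom_le_or_ge:
  fixes a p :: "'a::complete_lattice"
  assumes "atom a" and "pseudo_complement a p"
  shows "x \<le> p \<or> a \<le> x"
  using atom_inf_eq_bot_or_le[OF assms(1)] assms(2) by (auto simp: pseudo_complement_def)

lemma strongly_irreducible_pseudo_complement_of_atom:
  fixes a p :: "'a::complete_lattice"
  assumes atom: "atom a" and pc: "pseudo_complement a p"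
  shows "strongly_irreducible p"
  unfolding strongly_irreducible_def
proof (intro allI impI)
  fix x y assume xy: "inf x y \<le> p"
  have "\<not> a \<le> p"
    using atom pc by (auto simp: atom_def pseudo_complement_def inf_absorb1)
  then show "x \<le> p \<or> y \<le> p"
    using xy pseudo_complement_of_atom_le_or_ge[OF atom pc] by (meson le_inf_iff order_trans)
qed

lemma comparable_atom_or_pseudo_complement:
  fixes a p :: "'a::complete_lattice"
  assumes "atom a" and "pseudo_complement a p"
  shows "comparable x a \<or> comparable x p"
  using pseudo_complement_of_atom_le_or_ge[OF assms] by (auto simp: comparable_def)

lemma Omega_not_le: "x \<in> Omega p \<Longrightarrow> \<not> x \<le> p"
  by (auto simp: Omega_def inf_absorb2)

lemma Omega_downward_closed: "x \<in> Omega p \<Longrightarrow> y \<le> x \<Longrightarrow> y \<noteq> bot \<Longrightarrow> y \<in> Omega p"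
  unfolding Omega_def by (metis (mono_tags) bot_unique inf_mono mem_Collect_eq order_refl)

lemma Omega_inf_closed:
  fixes p :: "'a::complete_lattice"
  assumes "strongly_irreducible p" and "x \<in> Omega p" and "y \<in> Omega p"
  shows "inf x y \<in> Omega p"
proof -
  have "\<not> inf x y \<le> p"
    using assms Omega_not_le by (auto simp: strongly_irreducible_def)
  then have "inf x y \<noteq> bot" by auto
  then show ?thesis using Omega_downward_closed[OF assms(2)] by simp
qed

lemma Omega_Inf_closed:
  fixes p :: "'a::complete_lattice"
  assumes "strongly_irreducible p"
  shows "finite A \<Longrightarrow> A \<noteq> {} \<Longrightarrow> A \<subseteq> Omega p \<Longrightarrow> Inf A \<in> Omega p"
proof (induction A rule: finite_ne_induct)
  case (singleton x) then show ?case by simp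
next
  case (insert x F) then show ?case using Omega_inf_closed[OF assms] by simp
qed

lemma Inf_Omega_in_Omega:
  fixes p :: "'a::complete_lattice"
  assumes cocompact: "cocompact (bot :: 'a)" and si: "strongly_irreducible p"
    and x: "x \<in> Omega p"
  shows "Inf (Omega p) \<in> Omega p"
proof -
  have "Inf (Omega p) \<noteq> bot"
  proof
    assume "Inf (Omega p) = bot"
    then obtain A where A: "A \<subseteq> Omega p" "finite A" "Inf A \<le> bot"
      using cocompact unfolding cocompact_def by (metis order_refl)
    \<comment> \<open>Adding \<open>x\<close> guards against \<open>A = {}\<close>, where \<open>\<Sqinter>A = \<top>\<close>.\<close>
    have "Inf (insert x A) \<in> Omega p"
      using Omega_Inf_closed[OF si, of "insert x A"] A x by simp
    moreover have "Inf (insert x A) = bot"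
      using A(3) by (metis Inf_superset_mono bot_unique subset_insertI)
    ultimately show False by (simp add: Omega_def)
  qed
  then show ?thesis using Omega_downward_closed[OF x] Inf_lower[OF x] by blast
qed

lemma atom_least_Omega:
  fixes a p :: "'a::complete_lattice"
  assumes "a \<in> Omega p" and "\<forall>x\<in>Omega p. a \<le> x"
  shows "atom a"
  unfolding atom_def
proof (intro conjI equalityI subsetI)
  show "a \<noteq> bot" using assms(1) by (simp add: Omega_def)
  fix y assume "y \<in> {x. bot \<le> x \<and> x \<le> a}"
  then show "y \<in> {bot, a}"
    using assms Omega_downward_closed[OF assms(1)] by (auto intro: order_antisym)
qed auto

lemma pseudo_complement_if_strongly_irreducible:
  fixes a p :: "'a::complete_lattice"
  assumes si: "strongly_irreducible p" and a: "a \<in> Omega p"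
  shows "pseudo_complement a p"
  unfolding pseudo_complement_def
proof (intro conjI allI impI)
  show "inf a p = bot" using a by (simp add: Omega_def inf_commute)
  fix y assume "inf a y = bot"
  then have "a \<le> p \<or> y \<le> p" using si by (simp add: strongly_irreducible_def)
  then show "y \<le> p" using Omega_not_le[OF a] by blast
qed

theorem corollary1p17:
  fixes p :: "'a::complete_lattice"
  assumes "cocompact (bot :: 'a)"
    and "Omega p \<noteq> {}"
  shows "(strongly_irreducible p \<longleftrightarrow> (\<exists>a. atom a \<and> pseudo_complement a p))
    \<and> (strongly_irreducible p \<longrightarrow> (\<forall>a. atom a \<and> pseudo_complement a p \<longrightarrow>
          (\<forall>x. comparable x a \<or> comparable x p)))"
proof -
  have "\<exists>a. atom a \<and> pseudo_complement a p" if si: "strongly_irreducible p"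
  proof -
    obtain x where "x \<in> Omega p" using assms(2) by auto
    then have a: "Inf (Omega p) \<in> Omega p"
      using Inf_Omega_in_Omega[OF assms(1) si] by blast
    show ?thesis
      using atom_least_Omega[OF a] pseudo_complement_if_strongly_irreducible[OF si a]
      by (auto intro: Inf_lower)
  qed
  then show ?thesis
    using strongly_irreducible_pseudo_complement_of_atom comparable_atom_or_pseudo_complement
    by blast
qed

end
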